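(* Let $H$ be a complex Hilbert space, $A\in B(H)$ a nonzero positive semidefinite operator, and $T\in B_{A^{1/2}}(H)$ with $TA^{1/2}=A^{1/2}T$. Then $r_A(T)=r_A(T^{\diamond})$.
   Context: $\|x\|_A=\langle Ax,x\rangle^{1/2}$. For $S\in B(H)$, $\|S\|_A=\sup\{\|Sx\|_A : x\in\overline{R(A)},\ \|x\|_A=1\}$. $B_{A^{1/2}}(H)=\{S\in B(H): R(S^*A^{1/2})\subset R(A^{1/2})\}$. For $S\in B_{A^{1/2}}(H)$, $S^{\diamond}$ is the unique operator in $B(H)$ with $S^*A^{1/2}=A^{1/2}S^{\diamond}$ and $R(S^{\diamond})\subset\overline{R(A^{1/2})}$; $S^\diamond\in B_{A^{1/2}}(H)$. $r_A(S)=\lim_{n\to\infty}\|S^n\|_A^{1/n}$. *)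

theory Defs
  imports "HOL-Analysis.Analysis"
begin

class complex_vector = real_vector +
  fixes scaleC :: "complex \<Rightarrow> 'a \<Rightarrow> 'a"
  assumes scaleC_add_right: "scaleC a (x + y) = scaleC a x + scaleC a y"
    and scaleC_add_left: "scaleC (a + b) x = scaleC a x + scaleC b x"
    and scaleC_scaleC: "scaleC a (scaleC b x) = scaleC (a * b) x"
    and scaleC_one: "scaleC 1 x = x"
    and scaleR_scaleC: "scaleR r x = scaleC (complex_of_real r) x"

class complex_inner = complex_vector + real_normed_vector +
  fixes cinner :: "'a \<Rightarrow> 'a \<Rightarrow> complex"
  assumes cinner_commute: "cinner x y = cnj (cinner y x)"
    and cinner_add_left: "cinner (x + y) z = cinner x z + cinner y z"
    and cinner_scaleC_left: "cinner (scaleC c x) y = cnj c * cinner x y"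
    and cinner_self_real: "Im (cinner x x) = 0"
    and cinner_self_nonneg: "0 \<le> Re (cinner x x)"
    and cinner_self_eq_zero: "cinner x x = 0 \<longleftrightarrow> x = 0"
    and norm_eq_sqrt_cinner: "norm x = sqrt (Re (cinner x x))"

class chilbert_space = complex_inner + complete_space

definition bounded_clinear :: "('a::complex_inner \<Rightarrow> 'a) \<Rightarrow> bool" where
  "bounded_clinear S \<longleftrightarrow>
     (\<forall>x y. S (x + y) = S x + S y) \<and> (\<forall>c x. S (scaleC c x) = scaleC c (S x)) \<and>
     (\<exists>K. \<forall>x. norm (S x) \<le> norm x * K)"

definition cadjoint :: "('a::complex_inner \<Rightarrow> 'a) \<Rightarrow> ('a \<Rightarrow> 'a)" where
  "cadjoint S = (SOME S'. \<forall>x y. cinner (S x) y = cinner x (S' y))"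

definition pos_op :: "('a::complex_inner \<Rightarrow> 'a) \<Rightarrow> bool" where
  "pos_op A \<longleftrightarrow> bounded_clinear A \<and>
     (\<forall>x. Im (cinner (A x) x) = 0 \<and> 0 \<le> Re (cinner (A x) x))"

definition op_sqrt :: "('a::complex_inner \<Rightarrow> 'a) \<Rightarrow> ('a \<Rightarrow> 'a)" where
  "op_sqrt A = (THE B. pos_op B \<and> B \<circ> B = A)"

definition normA :: "('a::complex_inner \<Rightarrow> 'a) \<Rightarrow> 'a \<Rightarrow> real" where
  "normA A x = sqrt (Re (cinner (A x) x))"

definition opnormA :: "('a::complex_inner \<Rightarrow> 'a) \<Rightarrow> ('a \<Rightarrow> 'a) \<Rightarrow> real" where
  "opnormA A S = Sup {normA A (S x) | x. x \<in> closure (range A) \<and> normA A x = 1}"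

definition in_BA_half :: "('a::complex_inner \<Rightarrow> 'a) \<Rightarrow> ('a \<Rightarrow> 'a) \<Rightarrow> bool" where
  "in_BA_half A S \<longleftrightarrow> bounded_clinear S \<and>
     range (cadjoint S \<circ> op_sqrt A) \<subseteq> range (op_sqrt A)"

definition diamond :: "('a::complex_inner \<Rightarrow> 'a) \<Rightarrow> ('a \<Rightarrow> 'a) \<Rightarrow> ('a \<Rightarrow> 'a)" where
  "diamond A S = (THE S'. bounded_clinear S' \<and> cadjoint S \<circ> op_sqrt A = op_sqrt A \<circ> S' \<and>
                       range S' \<subseteq> closure (range (op_sqrt A)))"

definition rA :: "('a::complex_inner \<Rightarrow> 'a) \<Rightarrow> ('a \<Rightarrow> 'a) \<Rightarrow> real" where
  "rA A S = lim (\<lambda>n. root n (opnormA A (S ^^ n)))"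

end

theory Submission
  imports Defs
begin

(* Since T commutes with A^(1/2), so does its Hilbert adjoint T', and T^diamond is T' followed by
   the orthogonal projection onto the closure of R(A^(1/2)); hence A^(1/2) T^diamond = T' A^(1/2)
   and ||(T^diamond)^n x||_A = ||T'^n x||_A.  For mutually adjoint R, R' commuting with A^(1/2),
   ||R' y||^2 = <R R' y, y> yields ||R'||_A <= ||R||_A, and symmetrically.  So ||T^n||_A,
   ||T'^n||_A and ||(T^diamond)^n||_A coincide for every n, and so do the limits defining r_A. *)

subclass (in chilbert_space) banach ..

lemma scaleC_zero_left [simp]: "scaleC 0 (x::'a::complex_vector) = 0"
  using scaleR_scaleC[of 0 x] by simp

lemma scaleC_zero_right [simp]: "scaleC a (0::'a::complex_vector) = 0"
  using scaleC_add_right[of a "0::'a" 0] by simp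

lemma scaleC_minus_left: "scaleC (- a) x = - scaleC a (x::'a::complex_vector)"
  using scaleC_add_left[of a "-a" x] by (simp add: add_eq_0_iff2)

lemma scaleC_minus_right: "scaleC a (- x) = - scaleC a (x::'a::complex_vector)"
  using scaleC_add_right[of a x "-x"] by (simp add: add_eq_0_iff2)

lemma scaleC_diff_right: "scaleC a (x - y) = scaleC a x - scaleC a (y::'a::complex_vector)"
  using scaleC_add_right[of a x "-y"] by (simp add: scaleC_minus_right)

lemma cinner_add_right: "cinner x (y + z) = cinner x y + cinner (x::'a::complex_inner) z"
  by (metis cinner_commute cinner_add_left complex_cnj_add)

lemma cinner_scaleC_right: "cinner x (scaleC c y) = c * cinner (x::'a::complex_inner) y"
  by (metis cinner_commute cinner_scaleC_left complex_cnj_mult complex_cnj_cnj)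

lemma cinner_zero_left [simp]: "cinner 0 (y::'a::complex_inner) = 0"
  using cinner_scaleC_left[of 0 0 y] by simp

lemma cinner_zero_right [simp]: "cinner (x::'a::complex_inner) 0 = 0"
  using cinner_scaleC_right[of x 0 0] by simp

lemma cinner_diff_left: "cinner (x - y) z = cinner x z - cinner (y::'a::complex_inner) z"
  using cinner_add_left[of "x - y" y z] by simp

lemma cinner_diff_right: "cinner x (y - z) = cinner x y - cinner (x::'a::complex_inner) z"
  using cinner_add_right[of x "y - z" z] by simp

lemma cinner_scaleR_left: "cinner (scaleR r x) y = of_real r * cinner (x::'a::complex_inner) y"
  by (simp add: scaleR_scaleC cinner_scaleC_left)

lemma cinner_scaleR_right: "cinner x (scaleR r y) = of_real r * cinner (x::'a::complex_inner) y"
  by (simp add: scaleR_scaleC cinner_scaleC_right)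

lemma cinner_self: "cinner x x = complex_of_real ((norm (x::'a::complex_inner))\<^sup>2)"
  using norm_eq_sqrt_cinner[of x] cinner_self_nonneg[of x] cinner_self_real[of x]
  by (simp add: complex_eq_iff)

lemma Re_cinner_self: "Re (cinner x x) = (norm (x::'a::complex_inner))\<^sup>2"
  by (simp add: cinner_self)

lemma cinner_eq_zero_imp_zero: "(\<And>z. cinner x z = 0) \<Longrightarrow> x = (0::'a::complex_inner)"
  using cinner_self_eq_zero by blast

lemma cinner_ext: "(\<And>z. cinner z u = cinner z v) \<Longrightarrow> u = (v::'a::complex_inner)"
  using cinner_self_eq_zero[of "u - v"] by (simp add: cinner_diff_right)

lemma norm_scaleC: "norm (scaleC c (x::'a::complex_inner)) = cmod c * norm x"
proof -
  have "cinner (scaleC c x) (scaleC c x) = (cnj c * c) * cinner x x"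
    by (simp add: cinner_scaleC_left cinner_scaleC_right mult.assoc)
  also have "cnj c * c = of_real ((cmod c)\<^sup>2)"
    using complex_norm_square[of c] by (simp add: mult.commute)
  also have "cinner x x = of_real ((norm x)\<^sup>2)" by (rule cinner_self)
  finally have "Re (cinner (scaleC c x) (scaleC c x)) = (cmod c * norm x)\<^sup>2"
    by (simp add: power_mult_distrib)
  then have "(norm (scaleC c x))\<^sup>2 = (cmod c * norm x)\<^sup>2" by (simp only: Re_cinner_self)
  then show ?thesis by (simp add: power2_eq_iff_nonneg)
qed

lemma norm_add_scaleC_square:
  "(norm (u + scaleC s z))\<^sup>2 =
     (norm u)\<^sup>2 + 2 * Re (s * cinner u (z::'a::complex_inner)) + (cmod s)\<^sup>2 * (norm z)\<^sup>2"
proof -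
  have "cinner (u + scaleC s z) (u + scaleC s z) =
     cinner u u + (s * cinner u z + cnj s * cinner z u) + (cnj s * s) * cinner z z"
    by (simp add: cinner_add_left cinner_add_right cinner_scaleC_left cinner_scaleC_right algebra_simps)
  also have "s * cinner u z + cnj s * cinner z u = of_real (2 * Re (s * cinner u z))"
    by (metis cinner_commute complex_cnj_mult complex_add_cnj)
  also have "cnj s * s = of_real ((cmod s)\<^sup>2)"
    using complex_norm_square[of s] by (simp add: mult.commute)
  finally have "Re (cinner (u + scaleC s z) (u + scaleC s z)) =
      (norm u)\<^sup>2 + 2 * Re (s * cinner u z) + (cmod s)\<^sup>2 * (norm z)\<^sup>2"
    by (simp add: cinner_self)
  then show ?thesis by (simp only: Re_cinner_self)
qed

lemma parallelogram_law:
  "(norm (a + b))\<^sup>2 + (norm (a - b))\<^sup>2 = 2 * (norm a)\<^sup>2 + 2 * (norm (b::'a::complex_inner))\<^sup>2"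
proof -
  have "cinner (a + b) (a + b) + cinner (a - b) (a - b) = 2 * cinner a a + 2 * cinner b b"
    by (simp add: cinner_add_left cinner_add_right cinner_diff_left cinner_diff_right algebra_simps)
  then have "Re (cinner (a + b) (a + b) + cinner (a - b) (a - b)) = Re (2 * cinner a a + 2 * cinner b b)"
    by simp
  then show ?thesis by (simp add: Re_cinner_self)
qed

lemma bounded_clinearI:
  assumes "\<And>x y. S (x + y) = S x + S y" "\<And>c x. S (scaleC c x) = scaleC c (S x)"
    and "\<And>x. norm (S x) \<le> norm x * K"
  shows "bounded_clinear S"
  unfolding bounded_clinear_def using assms by blast

lemma bounded_clinear_add: "bounded_clinear S \<Longrightarrow> S (x + y) = S x + S y"
  by (simp add: bounded_clinear_def)

lemma bounded_clinear_scaleC: "bounded_clinear S \<Longrightarrow> S (scaleC c x) = scaleC c (S x)"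
  by (simp add: bounded_clinear_def)

lemma bounded_clinear_pos_bound: "bounded_clinear S \<Longrightarrow> \<exists>K>0. \<forall>x. norm (S x) \<le> norm x * K"
proof -
  assume "bounded_clinear S"
  then obtain K where K: "\<forall>x. norm (S x) \<le> norm x * K" by (auto simp: bounded_clinear_def)
  then have "\<forall>x. norm (S x) \<le> norm x * max K 1"
    by (metis max.cobounded1 mult_left_mono norm_ge_zero order_trans)
  then show ?thesis by (intro exI[of _ "max K 1"]) auto
qed

lemma bounded_clinear_zero [simp]: "bounded_clinear S \<Longrightarrow> S 0 = 0"
  using bounded_clinear_add[of S 0 0] by simp

lemma bounded_clinear_diff: "bounded_clinear S \<Longrightarrow> S (x - y) = S x - S y"
  using bounded_clinear_add[of S "x - y" y] by simp

lemma bounded_clinear_scaleR: "bounded_clinear S \<Longrightarrow> S (scaleR r x) = scaleR r (S x)"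
  by (simp add: bounded_clinear_scaleC scaleR_scaleC)

lemma bounded_clinear_imp_bounded_linear: "bounded_clinear S \<Longrightarrow> bounded_linear S"
proof -
  assume S: "bounded_clinear S"
  then obtain K where "\<forall>x. norm (S x) \<le> norm x * K" by (auto simp: bounded_clinear_def)
  then show ?thesis
    by (intro bounded_linear_intro[of S K]) (simp_all add: S bounded_clinear_add bounded_clinear_scaleR)
qed

lemma bounded_clinear_ident: "bounded_clinear (\<lambda>x. x)"
  by (rule bounded_clinearI[where K = 1]) auto

lemma bounded_clinear_compose:
  assumes S: "bounded_clinear S" and R: "bounded_clinear R"
  shows "bounded_clinear (\<lambda>x. S (R x))"
proof -
  obtain K1 where K1: "\<forall>x. norm (S x) \<le> norm x * K1" "K1 > 0"
    using bounded_clinear_pos_bound[OF S] by auto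
  obtain K2 where K2: "\<forall>x. norm (R x) \<le> norm x * K2"
    using R by (auto simp: bounded_clinear_def)
  have "norm (S (R x)) \<le> norm x * (K2 * K1)" for x
  proof -
    have "norm (S (R x)) \<le> norm (R x) * K1" using K1 by auto
    also have "\<dots> \<le> (norm x * K2) * K1" using K1 K2 mult_right_mono by auto
    finally show ?thesis by (simp add: mult.assoc)
  qed
  then show ?thesis
    by (intro bounded_clinearI) (simp_all add: S R bounded_clinear_add bounded_clinear_scaleC)
qed

lemma bounded_clinear_funpow: "bounded_clinear S \<Longrightarrow> bounded_clinear (S ^^ n)"
proof (induction n)
  case 0
  show ?case using bounded_clinear_ident by (simp add: id_def)
next
  case (Suc n)
  then show ?case using bounded_clinear_compose by simp
qed

lemma bounded_clinear_scaleR_fun: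
  assumes S: "bounded_clinear S"
  shows "bounded_clinear (\<lambda>x. scaleR r (S x))"
proof -
  obtain K where K: "\<forall>x. norm (S x) \<le> norm x * K" using S by (auto simp: bounded_clinear_def)
  show ?thesis
  proof (rule bounded_clinearI)
    show "scaleR r (S (x + y)) = scaleR r (S x) + scaleR r (S y)" for x y
      by (simp add: S bounded_clinear_add scaleR_add_right)
    show "scaleR r (S (scaleC c x)) = scaleC c (scaleR r (S x))" for c x
      by (simp add: S bounded_clinear_scaleC scaleR_scaleC scaleC_scaleC mult.commute)
    show "norm (scaleR r (S x)) \<le> norm x * (\<bar>r\<bar> * K)" for x
      using K mult_left_mono[of "norm (S x)" "norm x * K" "\<bar>r\<bar>"] by (simp add: mult_ac)
  qed
qed

lemma bounded_clinear_diff_fun: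
  assumes S: "bounded_clinear S" and R: "bounded_clinear R"
  shows "bounded_clinear (\<lambda>x. S x - R x)"
proof -
  obtain K1 where K1: "\<forall>x. norm (S x) \<le> norm x * K1" using S by (auto simp: bounded_clinear_def)
  obtain K2 where K2: "\<forall>x. norm (R x) \<le> norm x * K2" using R by (auto simp: bounded_clinear_def)
  have "norm (S x - R x) \<le> norm x * (K1 + K2)" for x
    using norm_triangle_ineq4[of "S x" "R x"] K1 K2 by (smt (verit) distrib_left)
  then show ?thesis
    by (intro bounded_clinearI)
      (simp_all add: S R bounded_clinear_add bounded_clinear_scaleC scaleC_diff_right)
qed

definition hermitian :: "('a::complex_inner \<Rightarrow> 'a) \<Rightarrow> bool" where
  "hermitian D \<longleftrightarrow> (\<forall>x y. cinner (D x) y = cinner x (D y))"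

lemma hermitian_funpow: "hermitian D \<Longrightarrow> hermitian (D ^^ n)"
  by (induction n) (auto simp: hermitian_def funpow_swap1)

lemma hermitian_cinner_real: "hermitian D \<Longrightarrow> Im (cinner (D x) x) = 0"
  unfolding hermitian_def by (metis cinner_commute cnj.sel(2) complex_cnj_cnj neg_equal_zero)

text \<open>By polarization; only the reality of the diagonal of the form is used.\<close>
lemma pos_op_hermitian: "pos_op P \<Longrightarrow> cinner (P x) y = cinner x (P y)"
proof -
  assume P: "pos_op P"
  then have L: "bounded_clinear P" and R: "\<And>x. Im (cinner (P x) x) = 0"
    by (auto simp: pos_op_def)
  define q where "q u v = cinner (P u) v" for u v
  have e1: "q (x + y) (x + y) = q x x + q y y + q x y + q y x"
    unfolding q_def using L by (simp add: bounded_clinear_add cinner_add_left cinner_add_right)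
  have e2: "q (x + scaleC \<i> y) (x + scaleC \<i> y) = q x x + q y y + \<i> * q x y - \<i> * q y x"
    unfolding q_def using L
    by (simp add: bounded_clinear_add bounded_clinear_scaleC cinner_add_left cinner_add_right
        cinner_scaleC_left cinner_scaleC_right algebra_simps)
  have "q y x = cnj (q x y)"
    using e1 e2 R[of "x + y"] R[of "x + scaleC \<i> y"] R[of x] R[of y]
    by (simp add: q_def complex_eq_iff)
  then show ?thesis by (metis q_def cinner_commute complex_cnj_cnj)
qed

lemma pos_op_imp_hermitian: "pos_op P \<Longrightarrow> hermitian P"
  by (simp add: hermitian_def pos_op_hermitian)

lemma pos_op_ident: "pos_op (\<lambda>x. x)"
  by (simp add: pos_op_def bounded_clinear_ident cinner_self_real cinner_self_nonneg)

lemma nonneg_quadratic_discriminant: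
  fixes a b w :: real
  assumes "a \<ge> 0" "b \<ge> 0" "w \<ge> 0" and nonneg: "\<And>t. 0 \<le> a + 2*t*w + t\<^sup>2*w*b"
  shows "w \<le> a * b"
proof (cases "b > 0")
  case True
  have "0 \<le> a + 2*(-1/b)*w + (-1/b)\<^sup>2*w*b" by (rule nonneg)
  also have "\<dots> = a - w / b" using True by (simp add: field_simps power2_eq_square)
  finally show ?thesis using True by (simp add: divide_le_eq mult.commute)
next
  case False
  then have "b = 0" using assms by auto
  have "w = 0"
  proof (rule ccontr)
    assume "w \<noteq> 0"
    then have "w > 0" using assms by simp
    have "0 \<le> a + 2*(-(a+1)/(2*w))*w + (-(a+1)/(2*w))\<^sup>2*w*b" by (rule nonneg)
    also have "\<dots> = -1" using \<open>w > 0\<close> \<open>b = 0\<close> by (simp add: field_simps)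
    finally show False by simp
  qed
  then show ?thesis using \<open>b = 0\<close> by simp
qed

lemma pos_op_Cauchy_Schwarz:
  assumes P: "pos_op P"
  shows "(cmod (cinner (P x) y))\<^sup>2 \<le> Re (cinner (P x) x) * Re (cinner (P y) y)"
proof -
  have L: "bounded_clinear P" and pos: "\<And>x. Im (cinner (P x) x) = 0 \<and> 0 \<le> Re (cinner (P x) x)"
    using P by (auto simp: pos_op_def)
  define z where "z = cinner (P x) y"
  define a where "a = Re (cinner (P x) x)"
  define b where "b = Re (cinner (P y) y)"
  define w where "w = (cmod z)\<^sup>2"
  have ca: "cinner (P x) x = of_real a" and cb: "cinner (P y) y = of_real b"
    using pos[of x] pos[of y] by (simp_all add: a_def b_def complex_eq_iff)
  have cz: "cinner (P y) x = cnj z"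
    unfolding z_def using pos_op_hermitian[OF P] by (metis cinner_commute)
  have zz: "z * cnj z = of_real w" unfolding w_def using complex_norm_square[of z] by simp
  have "0 \<le> a + 2*t*w + t\<^sup>2*w*b" for t :: real
  proof -
    define s where "s = complex_of_real t * cnj z"
    have "cinner (P (x + scaleC s y)) (x + scaleC s y) =
        cinner (P x) x + s * z + cnj s * cnj z + cnj s * s * cinner (P y) y"
      using L by (simp add: bounded_clinear_add bounded_clinear_scaleC cinner_add_left
          cinner_add_right cinner_scaleC_left cinner_scaleC_right algebra_simps cz flip: z_def)
    also have "\<dots> = of_real a + 2 * of_real t * (z * cnj z) + (of_real t)\<^sup>2 * (z * cnj z) * of_real b"
      unfolding ca cb s_def power2_eq_square by simp
    also have "\<dots> = of_real (a + 2*t*w + t\<^sup>2*w*b)"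
      unfolding zz by simp
    finally show ?thesis using pos[of "x + scaleC s y"] by simp
  qed
  then have "w \<le> a * b"
    by (intro nonneg_quadratic_discriminant) (use pos in \<open>auto simp: a_def b_def w_def\<close>)
  then show ?thesis by (simp add: w_def z_def a_def b_def)
qed

lemma cinner_Cauchy_Schwarz: "cmod (cinner x y) \<le> norm x * norm (y::'a::complex_inner)"
proof -
  have "(cmod (cinner x y))\<^sup>2 \<le> (norm x * norm y)\<^sup>2"
    using pos_op_Cauchy_Schwarz[OF pos_op_ident, of x y] by (simp add: Re_cinner_self power_mult_distrib)
  then show ?thesis by (rule power2_le_imp_le) simp
qed

lemma pos_op_form_eq_zero:
  assumes "pos_op P" and "Re (cinner (P x) x) = 0"
  shows "P x = 0"
proof (rule cinner_eq_zero_imp_zero)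
  fix z
  have "(cmod (cinner (P x) z))\<^sup>2 \<le> 0"
    using pos_op_Cauchy_Schwarz[OF assms(1), of x z] assms(2) by simp
  then show "cinner (P x) z = 0" by simp
qed

lemma bounded_linear_scaleC: "bounded_linear (\<lambda>x::'a::complex_inner. scaleC c x)"
  by (rule bounded_linear_intro[of _ "cmod c"])
     (auto simp: scaleC_add_right scaleR_scaleC scaleC_scaleC mult.commute norm_scaleC)

lemma bounded_linear_cinner_left: "bounded_linear (\<lambda>v::'a::complex_inner. cinner v y)"
  by (rule bounded_linear_intro[of _ "norm y"])
     (auto simp: cinner_add_left cinner_scaleR_left scaleR_conv_of_real cinner_Cauchy_Schwarz)

section \<open>Orthogonal projection onto closed subspaces\<close>

definition csubspace :: "'a::complex_vector set \<Rightarrow> bool" where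
  "csubspace M \<longleftrightarrow> 0 \<in> M \<and> (\<forall>x\<in>M. \<forall>y\<in>M. x + y \<in> M) \<and> (\<forall>c. \<forall>x\<in>M. scaleC c x \<in> M)"

lemma csubspace_0: "csubspace M \<Longrightarrow> 0 \<in> M"
  by (simp add: csubspace_def)

lemma csubspace_add: "csubspace M \<Longrightarrow> x \<in> M \<Longrightarrow> y \<in> M \<Longrightarrow> x + y \<in> M"
  by (simp add: csubspace_def)

lemma csubspace_scaleC: "csubspace M \<Longrightarrow> x \<in> M \<Longrightarrow> scaleC c x \<in> M"
  by (simp add: csubspace_def)

lemma csubspace_diff: "csubspace M \<Longrightarrow> x \<in> M \<Longrightarrow> y \<in> M \<Longrightarrow> x - y \<in> M"
  using csubspace_add[of M x "scaleC (-1) y"] csubspace_scaleC[of M y "-1"]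
  by (simp add: scaleC_minus_left scaleC_one)

lemma csubspace_closure:
  assumes M: "csubspace (M::'a::complex_inner set)"
  shows "csubspace (closure M)"
  unfolding csubspace_def
proof (intro conjI ballI allI)
  show "0 \<in> closure M" using csubspace_0[OF M] closure_subset by blast
  fix x y assume "x \<in> closure M"
  then obtain f where f: "\<forall>n. f n \<in> M" "f \<longlonglongrightarrow> x" unfolding closure_sequential by blast
  have "\<forall>n. scaleC c (f n) \<in> M" "(\<lambda>n. scaleC c (f n)) \<longlonglongrightarrow> scaleC c x" for c
    using f csubspace_scaleC[OF M] bounded_linear.tendsto[OF bounded_linear_scaleC f(2)] by auto
  then show "scaleC c x \<in> closure M" for c
    unfolding closure_sequential by (intro exI[of _ "\<lambda>n. scaleC c (f n)"]) simp
  assume "y \<in> closure M"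
  then obtain g where g: "\<forall>n. g n \<in> M" "g \<longlonglongrightarrow> y" unfolding closure_sequential by blast
  have "\<forall>n. f n + g n \<in> M" "(\<lambda>n. f n + g n) \<longlonglongrightarrow> x + y"
    using f g csubspace_add[OF M] tendsto_add[OF f(2) g(2)] by auto
  then show "x + y \<in> closure M"
    unfolding closure_sequential by (intro exI[of _ "\<lambda>n. f n + g n"]) simp
qed

lemma csubspace_range:
  assumes S: "bounded_clinear S"
  shows "csubspace (range S)"
  unfolding csubspace_def
proof (intro conjI ballI allI)
  show "0 \<in> range S" using bounded_clinear_zero[OF S] by (metis rangeI)
  fix x y assume "x \<in> range S" "y \<in> range S"
  then obtain a b where "x = S a" "y = S b" by blast
  then show "x + y \<in> range S" "scaleC c x \<in> range S" for c
    using bounded_clinear_add[OF S, of a b] bounded_clinear_scaleC[OF S, of c a] by (metis rangeI)+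
qed

lemma csubspace_closure_range: "bounded_clinear S \<Longrightarrow> csubspace (closure (range S))"
  by (intro csubspace_closure csubspace_range)

text \<open>A minimizing sequence is Cauchy: by the parallelogram law the midpoint of two of its
  members lies in \<open>M\<close>, hence is no closer to \<open>x\<close> than the infimum \<open>d\<close>.\<close>
lemma csubspace_minimizing_sequence_Cauchy:
  fixes M :: "'a::complex_inner set"
  assumes M: "csubspace M" and f: "\<And>n. f n \<in> M"
    and lower: "\<And>m. m \<in> M \<Longrightarrow> d \<le> (norm (x - m))\<^sup>2"
    and approx: "\<And>n. (norm (x - f n))\<^sup>2 < d + 1 / (real n + 1)"
  shows "Cauchy f"
proof -
  have dist_sq: "(norm (f j - f k))\<^sup>2 \<le> 2 / (real j + 1) + 2 / (real k + 1)" for j k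
  proof -
    define h where "h = scaleR (1/2) (f j + f k)"
    have "h \<in> M" unfolding h_def scaleR_scaleC using M f by (intro csubspace_scaleC csubspace_add)
    have "(x - f j) + (x - f k) = scaleR 2 (x - h)"
      unfolding h_def by (simp add: algebra_simps scaleR_2)
    then have "(norm ((x - f j) + (x - f k)))\<^sup>2 = 4 * (norm (x - h))\<^sup>2"
      by (simp add: power2_eq_square)
    moreover have "(norm ((x - f j) - (x - f k)))\<^sup>2 = (norm (f j - f k))\<^sup>2"
      by (simp add: norm_minus_commute)
    ultimately have "(norm (f j - f k))\<^sup>2 = 2 * (norm (x - f j))\<^sup>2 + 2 * (norm (x - f k))\<^sup>2 - 4 * (norm (x - h))\<^sup>2"
      using parallelogram_law[of "x - f j" "x - f k"] by linarith
    then show ?thesis using lower[OF \<open>h \<in> M\<close>] approx[of j] approx[of k] by linarith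
  qed
  show ?thesis
  proof (rule metric_CauchyI)
    fix e :: real assume e: "e > 0"
    obtain N :: nat where "4 / e\<^sup>2 < real N" using reals_Archimedean2 by blast
    then have "4 < (real N + 1) * e\<^sup>2" using e by (simp add: field_simps) (smt (verit) zero_less_power)
    then have N: "4 / (real N + 1) < e\<^sup>2" by (simp add: divide_less_eq mult.commute)
    have "dist (f j) (f k) < e" if "N \<le> j" "N \<le> k" for j k
    proof -
      have "2 / (real j + 1) \<le> 2 / (real N + 1)" "2 / (real k + 1) \<le> 2 / (real N + 1)"
        using that by (auto intro!: divide_left_mono)
      then have "(dist (f j) (f k))\<^sup>2 < e\<^sup>2"
        using dist_sq[of j k] N by (simp add: dist_norm)
      then show ?thesis by (rule power2_less_imp_less) (use e in auto)
    qed
    then show "\<exists>N. \<forall>m\<ge>N. \<forall>n\<ge>N. dist (f m) (f n) < e" by blast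
  qed
qed

lemma closed_csubspace_nearest_point:
  fixes M :: "'a::chilbert_space set"
  assumes M: "csubspace M" and cl: "closed M"
  shows "\<exists>m\<in>M. \<forall>m'\<in>M. norm (x - m) \<le> norm (x - m')"
proof -
  define d where "d = Inf ((\<lambda>m. (norm (x - m))\<^sup>2) ` M)"
  have bdd: "bdd_below ((\<lambda>m. (norm (x - m))\<^sup>2) ` M)" by (rule bdd_belowI[of _ 0]) auto
  have lower: "d \<le> (norm (x - m))\<^sup>2" if "m \<in> M" for m
    unfolding d_def using bdd that by (auto intro!: cInf_lower)
  have "\<exists>m\<in>M. (norm (x - m))\<^sup>2 < d + 1 / (real n + 1)" for n
    using cInf_lessD[of "(\<lambda>m. (norm (x - m))\<^sup>2) ` M" "d + 1 / (real n + 1)"] csubspace_0[OF M]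
    unfolding d_def by fastforce
  then obtain f where f: "\<And>n. f n \<in> M" "\<And>n. (norm (x - f n))\<^sup>2 < d + 1 / (real n + 1)"
    by metis
  have "Cauchy f" by (rule csubspace_minimizing_sequence_Cauchy[OF M f(1) lower f(2)])
  then obtain m where m: "f \<longlonglongrightarrow> m" using Cauchy_convergent_iff convergent_def by blast
  have "m \<in> M" using cl f(1) m closed_sequentially by blast
  have "(\<lambda>n. 1 / (real n + 1)) \<longlonglongrightarrow> 0"
    using LIMSEQ_inverse_real_of_nat by (simp add: inverse_eq_divide add.commute)
  then have "(\<lambda>n. d + 1 / (real n + 1)) \<longlonglongrightarrow> d + 0" by (intro tendsto_add tendsto_const)
  then have "(norm (x - m))\<^sup>2 \<le> d + 0"
    using f(2) less_imp_le by (intro LIMSEQ_le[of "\<lambda>n. (norm (x - f n))\<^sup>2" _ "\<lambda>n. d + 1 / (real n + 1)"])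
      (auto intro!: tendsto_intros m)
  then have "(norm (x - m))\<^sup>2 \<le> (norm (x - m'))\<^sup>2" if "m' \<in> M" for m'
    using lower[OF that] by linarith
  then show ?thesis using \<open>m \<in> M\<close> by (auto simp: abs_le_square_iff)
qed

text \<open>First-order condition: moving the nearest point along \<open>t w z\<close> with \<open>w = \<langle>z, x - m\<rangle>\<close> cannot
  decrease the distance, which for all real \<open>t\<close> forces \<open>w = 0\<close>.\<close>
lemma nearest_point_orthogonal:
  assumes M: "csubspace M" and "m \<in> M" and nearest: "\<And>m'. m' \<in> M \<Longrightarrow> norm (x - m) \<le> norm (x - m')"
    and "z \<in> M"
  shows "cinner z (x - m) = 0"
proof -
  define w where "w = cinner z (x - m)"
  have "0 \<le> 0 + 2 * t * (cmod w)\<^sup>2 + t\<^sup>2 * (cmod w)\<^sup>2 * (norm z)\<^sup>2" for t :: real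
  proof -
    define s where "s = complex_of_real t * w"
    have "m - scaleC s z \<in> M" using assms by (intro csubspace_diff csubspace_scaleC)
    moreover have "x - (m - scaleC s z) = (x - m) + scaleC s z" by simp
    ultimately have "(norm (x - m))\<^sup>2 \<le> (norm ((x - m) + scaleC s z))\<^sup>2"
      using nearest by (metis norm_ge_zero power_mono)
    also have "\<dots> = (norm (x - m))\<^sup>2 + 2 * Re (s * cinner (x - m) z) + (cmod s)\<^sup>2 * (norm z)\<^sup>2"
      by (rule norm_add_scaleC_square)
    also have "s * cinner (x - m) z = of_real (t * (cmod w)\<^sup>2)"
      using complex_norm_square[of w] by (simp add: s_def w_def mult.assoc flip: cinner_commute)
    finally show ?thesis by (simp add: s_def norm_mult power_mult_distrib mult_ac)
  qed
  then have "(cmod w)\<^sup>2 \<le> 0 * (norm z)\<^sup>2" by (intro nonneg_quadratic_discriminant) auto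
  then show ?thesis by (simp add: w_def)
qed

definition proj :: "'a::chilbert_space set \<Rightarrow> 'a \<Rightarrow> 'a" where
  "proj M x = (SOME m. m \<in> M \<and> (\<forall>z\<in>M. cinner z (x - m) = 0))"

lemma
  fixes M :: "'a::chilbert_space set"
  assumes "csubspace M" "closed M"
  shows proj_in: "proj M x \<in> M"
    and proj_orthogonal: "z \<in> M \<Longrightarrow> cinner z (x - proj M x) = 0"
proof -
  have "\<exists>m. m \<in> M \<and> (\<forall>z\<in>M. cinner z (x - m) = 0)"
    using closed_csubspace_nearest_point[OF assms] nearest_point_orthogonal[OF assms(1)] by metis
  from someI_ex[OF this] show "proj M x \<in> M" "z \<in> M \<Longrightarrow> cinner z (x - proj M x) = 0"
    unfolding proj_def by auto
qed

lemma proj_unique: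
  fixes M :: "'a::chilbert_space set"
  assumes M: "csubspace M" "closed M" and "m \<in> M" and orth: "\<And>z. z \<in> M \<Longrightarrow> cinner z (x - m) = 0"
  shows "proj M x = m"
proof -
  have "proj M x - m \<in> M" using M \<open>m \<in> M\<close> by (intro csubspace_diff proj_in)
  moreover have "cinner z (proj M x - m) = 0" if "z \<in> M" for z
  proof -
    have "proj M x - m = (x - m) - (x - proj M x)" by simp
    then show ?thesis using orth[OF that] proj_orthogonal[OF M that, of x] by (simp add: cinner_diff_right)
  qed
  ultimately show ?thesis using cinner_self_eq_zero by (metis eq_iff_diff_eq_0)
qed

lemma bounded_clinear_proj:
  fixes M :: "'a::chilbert_space set"
  assumes M: "csubspace M" "closed M"
  shows "bounded_clinear (proj M)"
proof (rule bounded_clinearI)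
  note in_M = proj_in[OF M] and orth = proj_orthogonal[OF M]
  show "proj M (x + y) = proj M x + proj M y" for x y
  proof (rule proj_unique[OF M])
    show "proj M x + proj M y \<in> M" using in_M csubspace_add[OF M(1)] by blast
    have eq: "x + y - (proj M x + proj M y) = (x - proj M x) + (y - proj M y)" by simp
    show "cinner z (x + y - (proj M x + proj M y)) = 0" if "z \<in> M" for z
      unfolding eq cinner_add_right using orth[OF that, of x] orth[OF that, of y] by simp
  qed
  show "proj M (scaleC c x) = scaleC c (proj M x)" for c x
  proof (rule proj_unique[OF M])
    show "scaleC c (proj M x) \<in> M" using in_M csubspace_scaleC[OF M(1)] by blast
    show "cinner z (scaleC c x - scaleC c (proj M x)) = 0" if "z \<in> M" for z
      unfolding scaleC_diff_right[symmetric] cinner_scaleC_right using orth[OF that, of x] by simp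
  qed
  show "norm (proj M x) \<le> norm x * 1" for x
  proof -
    have "(norm x)\<^sup>2 = (norm (proj M x))\<^sup>2 + (norm (x - proj M x))\<^sup>2"
      using norm_add_scaleC_square[of "proj M x" 1 "x - proj M x"] orth[OF in_M]
      by (simp add: scaleC_one)
    then have "(norm (proj M x))\<^sup>2 \<le> (norm x)\<^sup>2" by simp
    then show ?thesis by (simp add: abs_le_square_iff)
  qed
qed

lemma closed_csubspace_orthogonal_outside:
  fixes M :: "'a::chilbert_space set"
  assumes M: "csubspace M" "closed M" and "M \<noteq> UNIV"
  shows "\<exists>u. u \<notin> M \<and> (\<forall>n\<in>M. cinner n u = 0)"
proof -
  obtain x where "x \<notin> M" using \<open>M \<noteq> UNIV\<close> by blast
  then have "x - proj M x \<notin> M"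
    using csubspace_add[OF M(1) _ proj_in[OF M, of x]] by fastforce
  then show ?thesis using proj_orthogonal[OF M] by blast
qed

section \<open>Adjoints\<close>

lemma riesz_representation:
  fixes f :: "'a::chilbert_space \<Rightarrow> complex"
  assumes add: "\<And>a b. f (a + b) = f a + f b" and scale: "\<And>c a. f (scaleC c a) = cnj c * f a"
    and cont: "continuous_on UNIV f"
  shows "\<exists>z. \<forall>x. f x = cinner x z"
proof -
  define N where "N = {x. f x = 0}"
  have "csubspace N"
    unfolding csubspace_def N_def using add scale scale[of 0 0] by simp
  moreover have "closed N" unfolding N_def using cont by (intro closed_Collect_eq) auto
  ultimately consider "N = UNIV" | u where "f u \<noteq> 0" "\<And>n. n \<in> N \<Longrightarrow> cinner n u = 0"
    using closed_csubspace_orthogonal_outside unfolding N_def by blast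
  then show ?thesis
  proof cases
    case 1
    then show ?thesis by (intro exI[of _ 0]) (auto simp: N_def)
  next
    case 2
    have "cinner u u \<noteq> 0"
      using 2(1) scale[of 0 0] by (auto simp: cinner_self_eq_zero)
    have "f x = cinner x (scaleC (f u / cinner u u) u)" for x
    proof -
      define c where "c = cnj (f x / f u)"
      have "f (x - scaleC c u) = 0"
        using add[of "x - scaleC c u" "scaleC c u"] scale 2(1) by (simp add: c_def)
      then have "cinner x u = cnj c * cinner u u"
        using 2(2)[of "x - scaleC c u"] by (simp add: N_def cinner_diff_left cinner_scaleC_left)
      then show ?thesis
        using 2(1) \<open>cinner u u \<noteq> 0\<close> by (simp add: c_def cinner_scaleC_right)
    qed
    then show ?thesis by blast
  qed
qed

lemma cinner_cadjoint:
  fixes T :: "'a::chilbert_space \<Rightarrow> 'a"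
  assumes T: "bounded_clinear T"
  shows "cinner (T x) y = cinner x (cadjoint T y)"
proof -
  have "\<exists>z. \<forall>x. cinner (T x) y = cinner x z" for y
  proof (rule riesz_representation)
    show "cinner (T (a + b)) y = cinner (T a) y + cinner (T b) y" for a b
      by (simp add: T bounded_clinear_add cinner_add_left)
    show "cinner (T (scaleC c a)) y = cnj c * cinner (T a) y" for c a
      by (simp add: T bounded_clinear_scaleC cinner_scaleC_left)
    show "continuous_on UNIV (\<lambda>x. cinner (T x) y)"
      using bounded_linear_compose[OF bounded_linear_cinner_left bounded_clinear_imp_bounded_linear[OF T]]
      by (simp add: linear_continuous_on)
  qed
  then have "\<exists>S. \<forall>x y. cinner (T x) y = cinner x (S y)" by metis
  from someI_ex[OF this] show ?thesis unfolding cadjoint_def by blast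
qed

lemma bounded_clinear_cadjoint:
  fixes T :: "'a::chilbert_space \<Rightarrow> 'a"
  assumes T: "bounded_clinear T"
  shows "bounded_clinear (cadjoint T)"
proof -
  note adj = cinner_cadjoint[OF T]
  obtain K where K: "K > 0" "\<forall>x. norm (T x) \<le> norm x * K" using bounded_clinear_pos_bound[OF T] by blast
  show ?thesis
  proof (rule bounded_clinearI)
    show "cadjoint T (a + b) = cadjoint T a + cadjoint T b" for a b
      by (rule cinner_ext) (simp add: adj[symmetric] cinner_add_right)
    show "cadjoint T (scaleC c a) = scaleC c (cadjoint T a)" for c a
      by (rule cinner_ext) (simp add: adj[symmetric] cinner_scaleC_right)
    show "norm (cadjoint T a) \<le> norm a * K" for a
    proof -
      define v where "v = cadjoint T a"
      have "(norm v)\<^sup>2 = Re (cinner v v)" by (simp add: Re_cinner_self)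
      also have "cinner v v = cinner (T v) a" by (simp add: adj v_def)
      also have "Re (cinner (T v) a) \<le> norm (T v) * norm a"
        using complex_Re_le_cmod cinner_Cauchy_Schwarz by (rule order_trans)
      also have "\<dots> \<le> (norm v * K) * norm a" using K by (simp add: mult_right_mono)
      finally have "norm v * norm v \<le> norm v * (norm a * K)" by (simp add: power2_eq_square mult_ac)
      then show ?thesis unfolding v_def[symmetric]
        using K by (cases "norm v = 0") (auto simp: mult_le_cancel_left)
    qed
  qed
qed

lemma cadjoint_commute:
  fixes T B :: "'a::chilbert_space \<Rightarrow> 'a"
  assumes T: "bounded_clinear T" and B: "hermitian B" and TB: "\<And>x. T (B x) = B (T x)"
  shows "cadjoint T (B x) = B (cadjoint T x)"
proof (rule cinner_ext)
  note adj = cinner_cadjoint[OF T] and herm = B[unfolded hermitian_def, rule_format]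
  fix z
  have "cinner z (cadjoint T (B x)) = cinner (B (T z)) x" by (simp add: adj herm)
  also have "\<dots> = cinner (B z) (cadjoint T x)" by (simp add: adj flip: TB)
  also have "\<dots> = cinner z (B (cadjoint T x))" by (simp add: herm)
  finally show "cinner z (cadjoint T (B x)) = cinner z (B (cadjoint T x))" .
qed

lemma cinner_funpow_adjoint:
  fixes R R' :: "'a::complex_inner \<Rightarrow> 'a"
  assumes adj: "\<And>u v. cinner (R u) v = cinner u (R' v)"
  shows "cinner ((R ^^ n) u) v = cinner u ((R' ^^ n) v)"
proof (induction n arbitrary: u v)
  case (Suc n)
  then show ?case by (simp add: adj funpow_swap1)
qed simp

section \<open>The positive square root\<close>

text \<open>The Taylor coefficients of \<open>1 - sqrt (1 - t)\<close>: the recursion compares coefficients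
  in \<open>f\<^sup>2 = 2 f - t\<close>.\<close>
fun sqrt_coeff :: "nat \<Rightarrow> real" where
  "sqrt_coeff k =
    (if k = 0 then 0 else if k = 1 then 1/2
     else (1/2) * (\<Sum>i\<in>{1..<k}. sqrt_coeff i * sqrt_coeff (k - i)))"

declare sqrt_coeff.simps [simp del]

lemma sqrt_coeff_0 [simp]: "sqrt_coeff 0 = 0"
  by (simp add: sqrt_coeff.simps)

lemma sqrt_coeff_1 [simp]: "sqrt_coeff 1 = 1/2" "sqrt_coeff (Suc 0) = 1/2"
  by (simp_all add: sqrt_coeff.simps)

lemma sqrt_coeff_nonneg: "0 \<le> sqrt_coeff k"
proof (induction k rule: less_induct)
  case (less k)
  then show ?case by (subst sqrt_coeff.simps) (auto intro!: sum_nonneg mult_nonneg_nonneg)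
qed

lemma sqrt_coeff_convolution:
  "(\<Sum>i\<le>k. sqrt_coeff i * sqrt_coeff (k - i)) = 2 * sqrt_coeff k - (if k = 1 then 1 else 0)"
proof (cases "k \<le> 1")
  case True
  then have "k = 0 \<or> k = 1" by auto
  then show ?thesis by auto
next
  case False
  then have "{..k} = insert 0 (insert k {1..<k})" by auto
  then have "(\<Sum>i\<le>k. sqrt_coeff i * sqrt_coeff (k - i)) =
      (\<Sum>i\<in>{1..<k}. sqrt_coeff i * sqrt_coeff (k - i))"
    using False by simp
  also have "\<dots> = 2 * sqrt_coeff k" using False by (subst (2) sqrt_coeff.simps) simp
  finally show ?thesis using False by simp
qed

lemma sum_sqrt_coeff_triangle_le:
  "(\<Sum>(i, j)\<in>{(i, j). i + j < n}. sqrt_coeff i * sqrt_coeff j) \<le> (\<Sum>k<n - 1. sqrt_coeff k)\<^sup>2"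
proof -
  define A where "A = {(i, j). i + j < n}"
  define B where "B = {..<n - 1} \<times> {..<n - 1}"
  have "finite A" by (rule finite_subset[of _ "{..<n} \<times> {..<n}"]) (auto simp: A_def)
  moreover have "\<forall>x\<in>A - A \<inter> B. (case x of (i, j) \<Rightarrow> sqrt_coeff i * sqrt_coeff j) = 0"
  proof
    fix x assume "x \<in> A - A \<inter> B"
    then obtain i j where "x = (i, j)" "i + j < n" "\<not> (i < n - 1 \<and> j < n - 1)"
      by (auto simp: A_def B_def)
    then have "x = (i, j)" "i = 0 \<or> j = 0" by auto
    then show "(case x of (i, j) \<Rightarrow> sqrt_coeff i * sqrt_coeff j) = 0" by auto
  qed
  ultimately have "(\<Sum>(i, j)\<in>A. sqrt_coeff i * sqrt_coeff j) = (\<Sum>(i, j)\<in>A \<inter> B. sqrt_coeff i * sqrt_coeff j)"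
    by (intro sum.mono_neutral_right) blast+
  also have "\<dots> \<le> (\<Sum>(i, j)\<in>B. sqrt_coeff i * sqrt_coeff j)"
    by (rule sum_mono2) (auto simp: B_def intro!: mult_nonneg_nonneg sqrt_coeff_nonneg)
  also have "\<dots> = (\<Sum>k<n - 1. sqrt_coeff k)\<^sup>2"
    unfolding B_def power2_eq_square sum_product sum.cartesian_product by simp
  finally show ?thesis unfolding A_def .
qed

text \<open>With \<open>s\<^sub>n = \<Sum>k<n. c\<^sub>k\<close>, the convolution identity gives \<open>2 s\<^sub>n - 1 \<le> s\<^sub>n\<^sub>-\<^sub>1\<^sup>2\<close>.\<close>
lemma sum_sqrt_coeff_lessThan_le_1: "(\<Sum>k<n. sqrt_coeff k) \<le> 1"
proof (induction n rule: less_induct)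
  case (less n)
  show ?case
  proof (cases "n < 2")
    case True
    then have "n = 0 \<or> n = 1" by auto
    then show ?thesis by auto
  next
    case False
    have "(\<Sum>(i, j)\<in>{(i, j). i + j < n}. sqrt_coeff i * sqrt_coeff j) =
        (\<Sum>k<n. \<Sum>i\<le>k. sqrt_coeff i * sqrt_coeff (k - i))"
      by (rule sum.triangle_reindex)
    also have "\<dots> = 2 * (\<Sum>k<n. sqrt_coeff k) - 1"
      using False by (simp add: sqrt_coeff_convolution sum_subtractf sum_distrib_left)
    finally have "2 * (\<Sum>k<n. sqrt_coeff k) - 1 \<le> (\<Sum>k<n - 1. sqrt_coeff k)\<^sup>2"
      using sum_sqrt_coeff_triangle_le[of n] by simp
    moreover have "(\<Sum>k<n - 1. sqrt_coeff k)\<^sup>2 \<le> 1"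
      using less[of "n - 1"] False by (simp add: power_le_one sum_nonneg sqrt_coeff_nonneg)
    ultimately show ?thesis by simp
  qed
qed

lemma sum_sqrt_coeff_le_1: "finite F \<Longrightarrow> sum sqrt_coeff F \<le> 1"
proof -
  assume "finite F"
  then obtain n where "F \<subseteq> {..<n}" by (metis finite_nat_bounded)
  then have "sum sqrt_coeff F \<le> sum sqrt_coeff {..<n}"
    by (intro sum_mono2) (auto intro: sqrt_coeff_nonneg)
  then show ?thesis using sum_sqrt_coeff_lessThan_le_1[of n] by simp
qed

lemma sum_sqrt_coeff_prod_le_1:
  "finite F \<Longrightarrow> (\<Sum>(i, j)\<in>F. sqrt_coeff i * sqrt_coeff j) \<le> 1"
proof -
  assume "finite F"
  then obtain n where "fst ` F \<subseteq> {..<n}" "snd ` F \<subseteq> {..<n}"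
    by (metis finite_imageI finite_nat_bounded finite_UnI Un_subset_iff)
  then have "F \<subseteq> {..<n} \<times> {..<n}" by force
  then have "(\<Sum>(i, j)\<in>F. sqrt_coeff i * sqrt_coeff j) \<le> (\<Sum>(i, j)\<in>{..<n} \<times> {..<n}. sqrt_coeff i * sqrt_coeff j)"
    by (intro sum_mono2) (auto intro: mult_nonneg_nonneg sqrt_coeff_nonneg)
  also have "\<dots> = (\<Sum>k<n. sqrt_coeff k)\<^sup>2"
    unfolding power2_eq_square sum_product sum.cartesian_product by simp
  also have "\<dots> \<le> 1"
    using sum_sqrt_coeff_lessThan_le_1 by (simp add: power_le_one sum_nonneg sqrt_coeff_nonneg)
  finally show ?thesis .
qed

lemma sqrt_coeff_summable: "sqrt_coeff summable_on UNIV"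
  by (rule nonneg_bdd_above_summable_on)
    (auto intro: sqrt_coeff_nonneg sum_sqrt_coeff_le_1 bdd_aboveI2[of _ _ 1])

lemma infsum_sqrt_coeff_le_1: "infsum sqrt_coeff UNIV \<le> 1"
  by (rule infsum_le_finite_sums[OF sqrt_coeff_summable]) (rule sum_sqrt_coeff_le_1)

lemma sqrt_coeff_prod_summable: "(\<lambda>(i, j). sqrt_coeff i * sqrt_coeff j) summable_on UNIV"
  by (rule nonneg_bdd_above_summable_on)
    (auto intro: mult_nonneg_nonneg sqrt_coeff_nonneg sum_sqrt_coeff_prod_le_1 bdd_aboveI2[of _ _ 1])

lemma sqrt_coeff_scaleR_summable:
  fixes v :: "nat \<Rightarrow> 'b::banach"
  assumes "\<And>k. norm (v k) \<le> B"
  shows "(\<lambda>k. sqrt_coeff k *\<^sub>R v k) summable_on UNIV"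
proof (rule abs_summable_summable, rule summable_on_comparison_test)
  show "(\<lambda>k. sqrt_coeff k * B) summable_on UNIV"
    by (rule summable_on_cmult_left[OF sqrt_coeff_summable])
  show "norm (sqrt_coeff k *\<^sub>R v k) \<le> sqrt_coeff k * B" for k
    using assms[of k] sqrt_coeff_nonneg[of k] by (simp add: mult_left_mono)
qed simp

definition contraction :: "('a::complex_inner \<Rightarrow> 'a) \<Rightarrow> bool" where
  "contraction D \<longleftrightarrow> bounded_clinear D \<and> (\<forall>x. norm (D x) \<le> norm x)"

text \<open>\<open>sqrt_series D = I - sqrt (I - D)\<close>.\<close>
definition sqrt_series :: "('a::chilbert_space \<Rightarrow> 'a) \<Rightarrow> 'a \<Rightarrow> 'a" where
  "sqrt_series D x = infsum (\<lambda>k. sqrt_coeff k *\<^sub>R (D ^^ k) x) UNIV"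

lemma contraction_funpow: "contraction D \<Longrightarrow> norm ((D ^^ k) x) \<le> norm x"
  by (induction k) (auto simp: contraction_def intro: order_trans)

lemma bounded_clinear_contraction_funpow: "contraction D \<Longrightarrow> bounded_clinear (D ^^ k)"
  by (simp add: contraction_def bounded_clinear_funpow)

lemma has_sum_sqrt_series:
  assumes "contraction D"
  shows "((\<lambda>k. sqrt_coeff k *\<^sub>R (D ^^ k) x) has_sum sqrt_series D x) UNIV"
  unfolding sqrt_series_def
  by (rule has_sum_infsum, rule sqrt_coeff_scaleR_summable[of _ "norm x"])
    (rule contraction_funpow[OF assms])

lemma sqrt_series_commute:
  assumes D: "contraction D" and G: "bounded_clinear G" and GD: "\<And>x. G (D x) = D (G x)"
  shows "G (sqrt_series D x) = sqrt_series D (G x)"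
proof -
  have "G ((D ^^ k) y) = (D ^^ k) (G y)" for k y
    by (induction k) (simp_all add: GD)
  then have "((\<lambda>k. sqrt_coeff k *\<^sub>R (D ^^ k) (G x)) has_sum G (sqrt_series D x)) UNIV"
    using has_sum_bounded_linear[OF bounded_clinear_imp_bounded_linear[OF G] has_sum_sqrt_series[OF D]]
    by (simp add: bounded_clinear_scaleR[OF G])
  then show ?thesis using has_sum_sqrt_series[OF D] has_sum_unique by blast
qed

lemma bounded_clinear_sqrt_series:
  assumes D: "contraction D"
  shows "bounded_clinear (sqrt_series D)"
proof (rule bounded_clinearI)
  note sums = has_sum_sqrt_series[OF D] and Dk = bounded_clinear_contraction_funpow[OF D]
  show "sqrt_series D (x + y) = sqrt_series D x + sqrt_series D y" for x y
    using has_sum_add[OF sums[of x] sums[of y]] sums[of "x + y"]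
    by (simp add: bounded_clinear_add[OF Dk] scaleR_add_right has_sum_unique)
  show "sqrt_series D (scaleC c x) = scaleC c (sqrt_series D x)" for c x
    using has_sum_bounded_linear[OF bounded_linear_scaleC sums[of x], of c] sums[of "scaleC c x"]
    by (simp add: bounded_clinear_scaleC[OF Dk] scaleR_scaleC scaleC_scaleC mult.commute has_sum_unique)
  show "norm (sqrt_series D x) \<le> norm x * 1" for x
  proof -
    have "((\<lambda>k. sqrt_coeff k * norm x) has_sum (infsum sqrt_coeff UNIV * norm x)) UNIV"
      by (rule has_sum_cmult_left, rule has_sum_infsum, rule sqrt_coeff_summable)
    then have "norm (sqrt_series D x) \<le> infsum sqrt_coeff UNIV * norm x"
      by (rule norm_infsum_le[OF sums])
        (use contraction_funpow[OF D] sqrt_coeff_nonneg in \<open>auto intro: mult_left_mono\<close>)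
    also have "\<dots> \<le> 1 * norm x" by (rule mult_right_mono[OF infsum_sqrt_coeff_le_1]) simp
    finally show ?thesis by simp
  qed
qed

lemma infsum_infsum_diagonal:
  fixes v :: "nat \<Rightarrow> nat \<Rightarrow> 'b::banach"
  assumes abs: "(\<lambda>(i, j). norm (v i j)) summable_on UNIV"
  shows "infsum (\<lambda>i. infsum (v i) UNIV) UNIV = infsum (\<lambda>k. \<Sum>i\<le>k. v i (k - i)) UNIV"
proof -
  define S where "S = Sigma (UNIV::nat set) (\<lambda>k. {..k})"
  define p where "p = (\<lambda>(k::nat, i::nat). (i, k - i))"
  have bij: "bij_betw p S UNIV"
  proof (rule bij_betw_byWitness[where f' = "\<lambda>(i, j). (i + j, i)"])
    show "\<forall>a\<in>S. (\<lambda>(i, j). (i + j, i)) (p a) = a" by (auto simp: S_def p_def)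
    show "\<forall>a'\<in>UNIV. p ((\<lambda>(i, j). (i + j, i)) a') = a'" by (auto simp: p_def)
    show "(\<lambda>(i, j). (i + j, i)) ` UNIV \<subseteq> S" by (auto simp: S_def)
  qed simp
  have comp: "(\<lambda>q. (\<lambda>(i, j). v i j) (p q)) = (\<lambda>(k, i). v i (k - i))"
    by (auto simp: p_def fun_eq_iff)
  have "(\<lambda>q. norm ((\<lambda>(i, j). v i j) q)) summable_on UNIV"
    using abs by (simp add: case_prod_unfold)
  then have summable: "(\<lambda>(i, j). v i j) summable_on UNIV" by (rule abs_summable_summable)
  then have "(\<lambda>(k, i). v i (k - i)) summable_on S"
    using summable_on_reindex_bij_betw[OF bij, of "\<lambda>(i, j). v i j"] comp by simp
  have "infsum (\<lambda>i. infsum (v i) UNIV) UNIV = infsum (\<lambda>(i, j). v i j) UNIV"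
    using infsum_Sigma'_banach[of v UNIV "\<lambda>_. UNIV"] summable by simp
  also have "\<dots> = infsum (\<lambda>(k, i). v i (k - i)) S"
    using infsum_reindex_bij_betw[OF bij, of "\<lambda>(i, j). v i j"] comp by simp
  also have "\<dots> = infsum (\<lambda>k. \<Sum>i\<le>k. v i (k - i)) UNIV"
    using infsum_Sigma'_banach[of "\<lambda>k i. v i (k - i)" UNIV "\<lambda>k. {..k}"]
      \<open>(\<lambda>(k, i). v i (k - i)) summable_on S\<close>
    unfolding S_def by simp
  finally show ?thesis .
qed

lemma has_sum_sqrt_series_convolution:
  assumes D: "contraction D"
  shows "((\<lambda>k. (2 * sqrt_coeff k - (if k = 1 then 1 else 0)) *\<^sub>R (D ^^ k) x)
    has_sum 2 *\<^sub>R sqrt_series D x - D x) UNIV"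
proof -
  have "((\<lambda>k. 2 *\<^sub>R (sqrt_coeff k *\<^sub>R (D ^^ k) x)) has_sum 2 *\<^sub>R sqrt_series D x) UNIV"
    by (rule has_sum_scaleR[OF has_sum_sqrt_series[OF D]])
  moreover have "((\<lambda>k::nat. - (if k = 1 then D x else 0)) has_sum - D x) UNIV"
    by (rule has_sum_finite_neutralI[of "{1}"]) auto
  ultimately have "((\<lambda>k. 2 *\<^sub>R (sqrt_coeff k *\<^sub>R (D ^^ k) x) + - (if k = 1 then D x else 0))
      has_sum 2 *\<^sub>R sqrt_series D x + - D x) UNIV"
    by (rule has_sum_add)
  moreover have "(\<lambda>k. 2 *\<^sub>R (sqrt_coeff k *\<^sub>R (D ^^ k) x) + - (if k = 1 then D x else 0)) =
      (\<lambda>k. (2 * sqrt_coeff k - (if k = 1 then 1 else 0)) *\<^sub>R (D ^^ k) x)"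
    by (auto simp: fun_eq_iff algebra_simps)
  ultimately show ?thesis by simp
qed

text \<open>The operator version of \<open>f\<^sup>2 = 2 f - t\<close>, by the Cauchy product of the series.\<close>
lemma sqrt_series_square:
  assumes D: "contraction D"
  shows "sqrt_series D (sqrt_series D x) = 2 *\<^sub>R sqrt_series D x - D x"
proof -
  define v where "v i j = (sqrt_coeff i * sqrt_coeff j) *\<^sub>R (D ^^ (i + j)) x" for i j
  note sums = has_sum_sqrt_series[OF D] and Dk = bounded_clinear_contraction_funpow[OF D]
  have row: "infsum (v i) UNIV = sqrt_coeff i *\<^sub>R (D ^^ i) (sqrt_series D x)" for i
  proof -
    have "bounded_linear (\<lambda>y. sqrt_coeff i *\<^sub>R (D ^^ i) y)"
      by (rule bounded_clinear_imp_bounded_linear[OF bounded_clinear_scaleR_fun[OF Dk]])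
    from has_sum_bounded_linear[OF this sums[of x]]
    have "((\<lambda>j. sqrt_coeff i *\<^sub>R (D ^^ i) (sqrt_coeff j *\<^sub>R (D ^^ j) x))
        has_sum sqrt_coeff i *\<^sub>R (D ^^ i) (sqrt_series D x)) UNIV" .
    moreover have "(\<lambda>j. sqrt_coeff i *\<^sub>R (D ^^ i) (sqrt_coeff j *\<^sub>R (D ^^ j) x)) = v i"
      by (simp add: fun_eq_iff v_def bounded_clinear_scaleR[OF Dk] funpow_add)
    ultimately show ?thesis by (simp add: infsumI)
  qed
  have diagonal: "(\<Sum>i\<le>k. v i (k - i)) = (2 * sqrt_coeff k - (if k = 1 then 1 else 0)) *\<^sub>R (D ^^ k) x" for k
  proof -
    have "(\<Sum>i\<le>k. v i (k - i)) = (\<Sum>i\<le>k. (sqrt_coeff i * sqrt_coeff (k - i)) *\<^sub>R (D ^^ k) x)"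
      by (intro sum.cong) (auto simp: v_def)
    then show ?thesis by (simp add: sqrt_coeff_convolution flip: scaleR_sum_left)
  qed
  have "norm (v i j) \<le> (sqrt_coeff i * sqrt_coeff j) * norm x" for i j
    unfolding v_def using contraction_funpow[OF D, of "i + j" x]
    by (simp add: mult_left_mono mult_nonneg_nonneg sqrt_coeff_nonneg)
  then have "(\<lambda>(i, j). norm (v i j)) summable_on UNIV"
    by (intro summable_on_comparison_test[OF summable_on_cmult_left[OF sqrt_coeff_prod_summable]])
      (auto split: prod.split)
  then have "infsum (\<lambda>i. infsum (v i) UNIV) UNIV = infsum (\<lambda>k. \<Sum>i\<le>k. v i (k - i)) UNIV"
    by (rule infsum_infsum_diagonal)
  then show ?thesis
    using infsumI[OF sums[of "sqrt_series D x"]] infsumI[OF has_sum_sqrt_series_convolution[OF D]]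
    by (simp add: row diagonal)
qed

lemma sqrt_series_form:
  fixes D :: "'a::chilbert_space \<Rightarrow> 'a"
  assumes D: "contraction D" and H: "hermitian D"
  shows "Im (cinner (sqrt_series D x) x) = 0" "Re (cinner (sqrt_series D x) x) \<le> (norm x)\<^sup>2"
proof -
  have sums: "((\<lambda>k. of_real (sqrt_coeff k) * cinner ((D ^^ k) x) x) has_sum cinner (sqrt_series D x) x) UNIV"
    using has_sum_bounded_linear[OF bounded_linear_cinner_left has_sum_sqrt_series[OF D]]
    by (simp add: cinner_scaleR_left)
  have "Im (cinner ((D ^^ k) x) x) = 0" for k
    by (rule hermitian_cinner_real[OF hermitian_funpow[OF H]])
  then have "((\<lambda>k::nat. 0::real) has_sum Im (cinner (sqrt_series D x) x)) UNIV"
    using has_sum_Im[OF sums] by simp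
  then show "Im (cinner (sqrt_series D x) x) = 0"
    using has_sum_0_simp by (rule has_sum_unique)
  have "Re (cinner ((D ^^ k) x) x) \<le> (norm x)\<^sup>2" for k
  proof -
    have "Re (cinner ((D ^^ k) x) x) \<le> norm ((D ^^ k) x) * norm x"
      using complex_Re_le_cmod cinner_Cauchy_Schwarz by (rule order_trans)
    also have "\<dots> \<le> norm x * norm x" by (rule mult_right_mono[OF contraction_funpow[OF D]]) simp
    finally show ?thesis by (simp add: power2_eq_square)
  qed
  then have "sqrt_coeff k * Re (cinner ((D ^^ k) x) x) \<le> sqrt_coeff k * (norm x)\<^sup>2" for k
    by (rule mult_left_mono[OF _ sqrt_coeff_nonneg])
  then have "Re (cinner (sqrt_series D x) x) \<le> infsum sqrt_coeff UNIV * (norm x)\<^sup>2"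
    by (intro has_sum_mono[OF has_sum_Re[OF sums]
          has_sum_cmult_left[OF has_sum_infsum[OF sqrt_coeff_summable]]]) simp
  also have "\<dots> \<le> (norm x)\<^sup>2" using mult_right_mono[OF infsum_sqrt_coeff_le_1] by simp
  finally show "Re (cinner (sqrt_series D x) x) \<le> (norm x)\<^sup>2" .
qed

lemma ident_minus_sqrt_series_square:
  assumes D: "contraction D"
  shows "(x - sqrt_series D x) - sqrt_series D (x - sqrt_series D x) = x - D x"
  using sqrt_series_square[OF D, of x]
  by (simp add: bounded_clinear_diff[OF bounded_clinear_sqrt_series[OF D]] scaleR_2 algebra_simps)

lemma pos_op_ident_minus_sqrt_series:
  assumes D: "contraction D" and H: "hermitian D"
  shows "pos_op (\<lambda>x. x - sqrt_series D x)"
  unfolding pos_op_def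
proof (intro conjI allI)
  show "bounded_clinear (\<lambda>x. x - sqrt_series D x)"
    by (rule bounded_clinear_diff_fun[OF bounded_clinear_ident bounded_clinear_sqrt_series[OF D]])
  fix x
  show "Im (cinner (x - sqrt_series D x) x) = 0" "0 \<le> Re (cinner (x - sqrt_series D x) x)"
    using sqrt_series_form[OF D H, of x] cinner_self_real[of x]
    by (simp_all add: cinner_diff_left Re_cinner_self)
qed

lemma pos_op_shift_contraction:
  fixes A :: "'a::chilbert_space \<Rightarrow> 'a"
  assumes A: "pos_op A" and K: "K > 0" "\<And>x. norm (A x) \<le> norm x * K"
  defines "D \<equiv> \<lambda>x. x - (1/K) *\<^sub>R A x"
  shows "contraction D" and "hermitian D"
proof -
  have Abcl: "bounded_clinear A" using A by (simp add: pos_op_def)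
  have Dbcl: "bounded_clinear D"
    unfolding D_def by (rule bounded_clinear_diff_fun[OF bounded_clinear_ident bounded_clinear_scaleR_fun[OF Abcl]])
  show H: "hermitian D"
    unfolding hermitian_def D_def
    by (simp add: cinner_diff_left cinner_diff_right cinner_scaleR_left cinner_scaleR_right pos_op_hermitian[OF A])
  have form: "cinner (D x) x = of_real ((norm x)\<^sup>2 - Re (cinner (A x) x) / K)" for x
    using A cinner_self[of x] by (simp add: D_def pos_op_def cinner_diff_left cinner_scaleR_left complex_eq_iff)
  have "Re (cinner (A x) x) \<le> K * (norm x)\<^sup>2" for x
  proof -
    have "Re (cinner (A x) x) \<le> norm (A x) * norm x"
      using complex_Re_le_cmod cinner_Cauchy_Schwarz by (rule order_trans)
    also have "\<dots> \<le> (norm x * K) * norm x" by (rule mult_right_mono[OF K(2)]) simp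
    finally show ?thesis by (simp add: power2_eq_square mult_ac)
  qed
  then have Dpos: "pos_op D"
    using A K(1) unfolding pos_op_def by (simp add: Dbcl form divide_le_eq mult.commute)
  have "Re (cinner (D x) x) \<le> (norm x)\<^sup>2" for x
    using A K(1) by (simp add: form pos_op_def)
  moreover have "(cmod (cinner (D x) (D x)))\<^sup>2 \<le> Re (cinner (D x) x) * Re (cinner (D (D x)) (D x))" for x
    by (rule pos_op_Cauchy_Schwarz[OF Dpos])
  ultimately have "((norm (D x))\<^sup>2)\<^sup>2 \<le> (norm x)\<^sup>2 * (norm (D x))\<^sup>2" for x
    using Dpos unfolding pos_op_def
    by (smt (verit, best) cinner_self norm_of_real mult_mono zero_le_power2)
  then have "(norm (D x))\<^sup>2 \<le> (norm x)\<^sup>2" for x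
    by (cases "norm (D x) = 0") (auto simp: power2_eq_square mult_le_cancel_right)
  then show "contraction D"
    unfolding contraction_def using Dbcl by (simp add: abs_le_square_iff[symmetric])
qed

text \<open>Scale \<open>A\<close> into \<open>I - D\<close> with \<open>D\<close> a Hermitian contraction, take \<open>I - sqrt_series D\<close>, and scale back.
  Every operator commuting with \<open>A\<close> commutes with \<open>D\<close>, hence with the series.\<close>
lemma pos_op_commuting_sqrt_exists:
  fixes A :: "'a::chilbert_space \<Rightarrow> 'a"
  assumes A: "pos_op A"
  shows "\<exists>B. pos_op B \<and> (\<forall>x. B (B x) = A x) \<and>
    (\<forall>C. bounded_clinear C \<and> (\<forall>x. C (A x) = A (C x)) \<longrightarrow> (\<forall>x. C (B x) = B (C x)))"
proof -
  obtain K where K: "K > 0" "\<And>x. norm (A x) \<le> norm x * K"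
    using A bounded_clinear_pos_bound unfolding pos_op_def by blast
  define D where "D x = x - (1/K) *\<^sub>R A x" for x
  have D: "contraction D" "hermitian D"
    using pos_op_shift_contraction[OF A K] unfolding D_def[abs_def] by blast+
  define B where "B x = sqrt K *\<^sub>R (x - sqrt_series D x)" for x
  have "bounded_clinear B"
    unfolding B_def by (intro bounded_clinear_scaleR_fun bounded_clinear_diff_fun
        bounded_clinear_ident bounded_clinear_sqrt_series[OF D(1)])
  then have "pos_op B"
    using pos_op_ident_minus_sqrt_series[OF D] K(1)
    by (simp add: pos_op_def B_def cinner_scaleR_left)
  moreover have "B (B x) = A x" for x
  proof -
    have "B (B x) = K *\<^sub>R ((x - sqrt_series D x) - sqrt_series D (x - sqrt_series D x))"
      using K(1) bounded_clinear_sqrt_series[OF D(1)]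
      by (simp add: B_def bounded_clinear_scaleR bounded_clinear_diff scaleR_diff_right)
    then show ?thesis using K(1) by (simp add: ident_minus_sqrt_series_square[OF D(1)] D_def)
  qed
  moreover have "C (B x) = B (C x)" if C: "bounded_clinear C" and CA: "\<And>x. C (A x) = A (C x)" for C x
  proof -
    have "C (D y) = D (C y)" for y
      by (simp add: D_def C CA bounded_clinear_diff bounded_clinear_scaleR)
    then show ?thesis
      by (simp add: B_def C bounded_clinear_diff bounded_clinear_scaleR sqrt_series_commute[OF D(1) C])
  qed
  ultimately show ?thesis by blast
qed

text \<open>If two commuting positive square roots \<open>B, B'\<close> of the same operator differ, then
  \<open>y = B x - B' x\<close> satisfies \<open>B y + B' y = 0\<close>, so both forms vanish at \<open>y\<close>.\<close>
lemma pos_op_sqrt_unique: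
  assumes B: "pos_op B" and B': "pos_op B'" and sq: "\<And>x. B (B x) = B' (B' x)"
    and comm: "\<And>x. B' (B x) = B (B' x)"
  shows "B' = B"
proof
  fix x
  have Bbcl: "bounded_clinear B" and B'bcl: "bounded_clinear B'"
    using B B' by (simp_all add: pos_op_def)
  define y where "y = B x - B' x"
  have "B y + B' y = 0"
    by (simp add: y_def bounded_clinear_diff[OF Bbcl] bounded_clinear_diff[OF B'bcl] sq comm)
  then have "Re (cinner (B y) y) + Re (cinner (B' y) y) = 0"
    by (metis cinner_add_left cinner_zero_left plus_complex.sel(1) zero_complex.sel(1))
  moreover have "0 \<le> Re (cinner (B y) y)" "0 \<le> Re (cinner (B' y) y)"
    using B B' by (simp_all add: pos_op_def)
  ultimately have "B y = 0" "B' y = 0"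
    using pos_op_form_eq_zero[OF B, of y] pos_op_form_eq_zero[OF B', of y] by linarith+
  then have "cinner y y = 0"
    by (simp add: y_def cinner_diff_left pos_op_hermitian[OF B] pos_op_hermitian[OF B'])
  then show "B' x = B x" by (simp add: y_def cinner_self_eq_zero)
qed

lemma
  fixes A :: "'a::chilbert_space \<Rightarrow> 'a"
  assumes A: "pos_op A"
  shows pos_op_op_sqrt: "pos_op (op_sqrt A)" and op_sqrt_square: "op_sqrt A (op_sqrt A x) = A x"
proof -
  obtain B where B: "pos_op B" "\<And>x. B (B x) = A x"
    and comm: "\<And>C. bounded_clinear C \<Longrightarrow> (\<And>x. C (A x) = A (C x)) \<Longrightarrow> C (B x) = B (C x)" for x
    using pos_op_commuting_sqrt_exists[OF A] by blast
  have uniq: "B' = B" if "pos_op B' \<and> B' \<circ> B' = A" for B'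
  proof (rule pos_op_sqrt_unique[OF B(1)])
    show "pos_op B'" "B (B x) = B' (B' x)" for x using that B(2) by (auto simp: fun_eq_iff)
    have "B' (A x) = A (B' x)" for x using that by (metis comp_apply)
    then show "B' (B x) = B (B' x)" for x using that comm[of B'] by (simp add: pos_op_def)
  qed
  have "pos_op B \<and> B \<circ> B = A" using B by (auto simp: fun_eq_iff)
  then have "\<exists>!B. pos_op B \<and> B \<circ> B = A" using uniq by blast
  then have "pos_op (op_sqrt A) \<and> op_sqrt A \<circ> op_sqrt A = A"
    unfolding op_sqrt_def by (rule theI')
  then show "pos_op (op_sqrt A)" "op_sqrt A (op_sqrt A x) = A x"
    by (auto simp: fun_eq_iff)
qed

section \<open>The \<open>A\<close>-seminorm and the operator \<open>S\<^sup>\<diamond>\<close>\<close>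

lemma normA_nonneg: "pos_op A \<Longrightarrow> 0 \<le> normA A x"
  by (simp add: normA_def pos_op_def)

lemma normA_eq_norm_op_sqrt:
  fixes A :: "'a::chilbert_space \<Rightarrow> 'a"
  assumes A: "pos_op A"
  shows "normA A x = norm (op_sqrt A x)"
  using pos_op_hermitian[OF pos_op_op_sqrt[OF A], of "op_sqrt A x" x]
  by (simp add: normA_def op_sqrt_square[OF A] Re_cinner_self)

lemma op_sqrt_eq_zero:
  fixes A :: "'a::chilbert_space \<Rightarrow> 'a"
  assumes A: "pos_op A" and "A x = 0"
  shows "op_sqrt A x = 0"
  using normA_eq_norm_op_sqrt[OF A, of x] \<open>A x = 0\<close> by (simp add: normA_def)

lemma pos_op_eq_zero_on_closure_range:
  fixes B :: "'a::chilbert_space \<Rightarrow> 'a"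
  assumes B: "pos_op B" and m: "m \<in> closure (range B)" and "B m = 0"
  shows "m = 0"
proof -
  obtain f where f: "\<forall>n. f n \<in> range B" "f \<longlonglongrightarrow> m"
    using m unfolding closure_sequential by blast
  have "cinner (f n) m = 0" for n
  proof -
    obtain z where "f n = B z" using f(1) by blast
    then show ?thesis using pos_op_hermitian[OF B, of z m] \<open>B m = 0\<close> by simp
  qed
  then have "(\<lambda>n. cinner (f n) m) \<longlonglongrightarrow> 0" by simp
  moreover have "(\<lambda>n. cinner (f n) m) \<longlonglongrightarrow> cinner m m"
    by (rule bounded_linear.tendsto[OF bounded_linear_cinner_left f(2)])
  ultimately have "0 = cinner m m" by (rule LIMSEQ_unique)
  then show ?thesis by (simp add: cinner_self_eq_zero[symmetric])
qed

lemma pos_op_proj_closure_range: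
  fixes P :: "'a::chilbert_space \<Rightarrow> 'a"
  assumes P: "pos_op P"
  shows "P (proj (closure (range P)) w) = P w"
proof -
  have Pbcl: "bounded_clinear P" using P by (simp add: pos_op_def)
  note M = csubspace_closure_range[OF Pbcl] closed_closure
  define n where "n = w - proj (closure (range P)) w"
  have "cinner (P z) n = 0" for z
    using proj_orthogonal[OF M closure_subset[THEN subsetD, OF rangeI[of P z]], of w]
    by (simp add: n_def)
  then have "cinner (P n) (P n) = 0" by (simp add: pos_op_hermitian[OF P])
  then have "P n = 0" by (simp add: cinner_self_eq_zero)
  then show ?thesis by (simp add: n_def bounded_clinear_diff[OF Pbcl])
qed

lemma diamond_eqI:
  fixes A T S :: "'a::chilbert_space \<Rightarrow> 'a"
  assumes A: "pos_op A" and S: "bounded_clinear S"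
    and intertwine: "cadjoint T \<circ> op_sqrt A = op_sqrt A \<circ> S"
    and range: "range S \<subseteq> closure (range (op_sqrt A))"
  shows "diamond A T = S"
  unfolding diamond_def
proof (rule the_equality)
  show "bounded_clinear S \<and> cadjoint T \<circ> op_sqrt A = op_sqrt A \<circ> S \<and> range S \<subseteq> closure (range (op_sqrt A))"
    using assms by blast
  fix S' assume S': "bounded_clinear S' \<and> cadjoint T \<circ> op_sqrt A = op_sqrt A \<circ> S' \<and>
    range S' \<subseteq> closure (range (op_sqrt A))"
  note B = pos_op_op_sqrt[OF A]
  have Bbcl: "bounded_clinear (op_sqrt A)" using B by (simp add: pos_op_def)
  show "S' = S"
  proof
    fix x
    have "S' x - S x \<in> closure (range (op_sqrt A))"
      using S' range by (intro csubspace_diff[OF csubspace_closure_range[OF Bbcl]]) auto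
    moreover have "op_sqrt A (S' x - S x) = 0"
      using S' intertwine by (simp add: bounded_clinear_diff[OF Bbcl] fun_eq_iff)
    ultimately show "S' x = S x" using pos_op_eq_zero_on_closure_range[OF B] by fastforce
  qed
qed

lemma op_sqrt_diamond:
  fixes A T :: "'a::chilbert_space \<Rightarrow> 'a"
  assumes A: "pos_op A" and T: "bounded_clinear T" and TB: "\<And>x. T (op_sqrt A x) = op_sqrt A (T x)"
  shows "op_sqrt A (diamond A T x) = cadjoint T (op_sqrt A x)"
proof -
  note B = pos_op_op_sqrt[OF A]
  have Bbcl: "bounded_clinear (op_sqrt A)" using B by (simp add: pos_op_def)
  define M where "M = closure (range (op_sqrt A))"
  have M: "csubspace M" "closed M" unfolding M_def by (simp_all add: csubspace_closure_range[OF Bbcl])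
  have TsB: "cadjoint T (op_sqrt A x) = op_sqrt A (cadjoint T x)" for x
    using cadjoint_commute[OF T pos_op_imp_hermitian[OF B] TB] .
  have "diamond A T = (\<lambda>x. proj M (cadjoint T x))"
  proof (rule diamond_eqI[OF A])
    show "bounded_clinear (\<lambda>x. proj M (cadjoint T x))"
      by (rule bounded_clinear_compose[OF bounded_clinear_proj[OF M] bounded_clinear_cadjoint[OF T]])
    show "cadjoint T \<circ> op_sqrt A = op_sqrt A \<circ> (\<lambda>x. proj M (cadjoint T x))"
      using pos_op_proj_closure_range[OF B] by (simp add: fun_eq_iff TsB M_def)
    show "range (\<lambda>x. proj M (cadjoint T x)) \<subseteq> closure (range (op_sqrt A))"
      using proj_in[OF M] by (auto simp: M_def)
  qed
  then show ?thesis using pos_op_proj_closure_range[OF B] by (simp add: TsB M_def)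
qed

lemma opnormA_cong:
  "(\<And>x. normA A (S x) = normA A (S' x)) \<Longrightarrow> opnormA A S = opnormA A S'"
  by (simp add: opnormA_def)

lemma op_sqrt_proj_closure_range:
  fixes A :: "'a::chilbert_space \<Rightarrow> 'a"
  assumes A: "pos_op A"
  shows "op_sqrt A (proj (closure (range A)) w) = op_sqrt A w"
proof -
  have Abcl: "bounded_clinear A" and Bbcl: "bounded_clinear (op_sqrt A)"
    using A pos_op_op_sqrt[OF A] by (simp_all add: pos_op_def)
  show ?thesis
    using op_sqrt_eq_zero[OF A, of "w - proj (closure (range A)) w"] pos_op_proj_closure_range[OF A, of w]
    by (simp add: bounded_clinear_diff[OF Abcl] bounded_clinear_diff[OF Bbcl])
qed

lemma normA_le_opnormA_unit:
  fixes A S :: "'a::chilbert_space \<Rightarrow> 'a"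
  assumes A: "pos_op A" and S: "bounded_clinear S"
    and SB: "\<And>x. S (op_sqrt A x) = op_sqrt A (S x)"
    and "x \<in> closure (range A)" and "normA A x = 1"
  shows "normA A (S x) \<le> opnormA A S"
proof -
  define X where "X = {x. x \<in> closure (range A) \<and> normA A x = 1}"
  obtain K where K: "\<And>x. norm (S x) \<le> norm x * K" using S by (auto simp: bounded_clinear_def)
  have "normA A (S y) \<le> K" if "y \<in> X" for y
  proof -
    have "norm (op_sqrt A y) = 1" using that by (simp add: X_def normA_eq_norm_op_sqrt[OF A])
    then show ?thesis using K[of "op_sqrt A y"] by (simp add: normA_eq_norm_op_sqrt[OF A] flip: SB)
  qed
  moreover have "x \<in> X" using assms by (simp add: X_def)
  ultimately have "normA A (S x) \<le> Sup ((\<lambda>x. normA A (S x)) ` X)"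
    by (intro cSUP_upper bdd_aboveI2[of _ _ K])
  then show ?thesis by (simp add: opnormA_def X_def setcompr_eq_image)
qed

text \<open>Outside \<open>closure (range A)\<close> one replaces \<open>w\<close> by its projection, which has the same image
  under \<open>A\<^sup>1\<^sup>/\<^sup>2\<close>.\<close>
lemma normA_le_opnormA:
  fixes A S :: "'a::chilbert_space \<Rightarrow> 'a"
  assumes A: "pos_op A" and S: "bounded_clinear S"
    and SB: "\<And>x. S (op_sqrt A x) = op_sqrt A (S x)"
  shows "normA A (S w) \<le> opnormA A S * normA A w"
proof (cases "normA A w = 0")
  case True
  then show ?thesis by (simp add: normA_eq_norm_op_sqrt[OF A] S flip: SB)
next
  case False
  have Abcl: "bounded_clinear A" and Bbcl: "bounded_clinear (op_sqrt A)"
    using A pos_op_op_sqrt[OF A] by (simp_all add: pos_op_def)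
  define N where "N = closure (range A)"
  have N: "csubspace N" "closed N" unfolding N_def by (simp_all add: csubspace_closure_range[OF Abcl])
  define c where "c = 1 / normA A w"
  define x where "x = scaleR c (proj N w)"
  have "x \<in> N" unfolding x_def scaleR_scaleC by (rule csubspace_scaleC[OF N(1) proj_in[OF N]])
  have Bx: "op_sqrt A x = c *\<^sub>R op_sqrt A w"
    using op_sqrt_proj_closure_range[OF A, of w]
    by (simp add: x_def N_def bounded_clinear_scaleR[OF Bbcl])
  have "normA A x = 1"
    using False normA_nonneg[OF A, of w] by (simp add: normA_eq_norm_op_sqrt[OF A] Bx c_def)
  then have "normA A (S x) \<le> opnormA A S"
    using normA_le_opnormA_unit[OF A S SB] \<open>x \<in> N\<close> by (simp add: N_def)
  moreover have "normA A (S x) = c * normA A (S w)"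
    using False normA_nonneg[OF A, of w]
    by (simp add: normA_eq_norm_op_sqrt[OF A] bounded_clinear_scaleR[OF S] Bx c_def flip: SB)
  ultimately show ?thesis
    using False normA_nonneg[OF A, of w] by (simp add: c_def field_simps)
qed

text \<open>For \<open>y = A\<^sup>1\<^sup>/\<^sup>2 x\<close> with \<open>\<parallel>y\<parallel> = 1\<close>:
  \<open>\<parallel>R' x\<parallel>\<^sub>A\<^sup>2 = \<parallel>R' y\<parallel>\<^sup>2 = \<langle>R R' y, y\<rangle> \<le> \<parallel>R (R' x)\<parallel>\<^sub>A \<le> \<parallel>R\<parallel>\<^sub>A \<parallel>R' x\<parallel>\<^sub>A\<close>.\<close>
lemma opnormA_adjoint_le:
  fixes A R R' :: "'a::chilbert_space \<Rightarrow> 'a"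
  assumes A: "pos_op A" and R: "bounded_clinear R" and R': "bounded_clinear R'"
    and adj: "\<And>u v. cinner (R u) v = cinner u (R' v)"
    and RB: "\<And>x. R (op_sqrt A x) = op_sqrt A (R x)"
    and R'B: "\<And>x. R' (op_sqrt A x) = op_sqrt A (R' x)"
  shows "opnormA A R' \<le> opnormA A R"
proof -
  define X where "X = {x. x \<in> closure (range A) \<and> normA A x = 1}"
  have opnormA: "opnormA A S = Sup ((\<lambda>x. normA A (S x)) ` X)" for S
    by (simp add: opnormA_def X_def setcompr_eq_image)
  show ?thesis
  proof (cases "X = {}")
    case True
    then show ?thesis by (simp add: opnormA)
  next
    case False
    have "normA A (R' x) \<le> opnormA A R" if "x \<in> X" for x
    proof -
      define y where "y = op_sqrt A x"
      have "norm (op_sqrt A x) = 1" using that by (simp add: X_def normA_eq_norm_op_sqrt[OF A])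
      have "0 \<le> opnormA A R"
        using normA_le_opnormA_unit[OF A R RB] that normA_nonneg[OF A, of "R x"] by (force simp: X_def)
      have "(normA A (R' x))\<^sup>2 = Re (cinner (R (R' y)) y)"
        by (simp add: normA_eq_norm_op_sqrt[OF A] y_def R'B adj flip: Re_cinner_self)
      also have "\<dots> \<le> norm (R (R' y)) * norm y"
        using complex_Re_le_cmod cinner_Cauchy_Schwarz by (rule order_trans)
      also have "\<dots> = normA A (R (R' x))"
        by (simp add: \<open>norm (op_sqrt A x) = 1\<close> y_def normA_eq_norm_op_sqrt[OF A] RB R'B)
      also have "\<dots> \<le> opnormA A R * normA A (R' x)"
        by (rule normA_le_opnormA[OF A R RB])
      finally show ?thesis
        using \<open>0 \<le> opnormA A R\<close> normA_nonneg[OF A, of "R' x"]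
        by (cases "normA A (R' x) = 0") (auto simp: power2_eq_square mult_le_cancel_right)
    qed
    then show ?thesis unfolding opnormA[of R'] using False by (intro cSup_least) auto
  qed
qed

lemma funpow_intertwine: "(\<And>x. h (f x) = g (h x)) \<Longrightarrow> h ((f ^^ n) x) = (g ^^ n) (h x)"
  by (induction n) simp_all

lemma opnormA_funpow_cadjoint:
  fixes A T :: "'a::chilbert_space \<Rightarrow> 'a"
  assumes A: "pos_op A" and T: "bounded_clinear T" and TB: "\<And>x. T (op_sqrt A x) = op_sqrt A (T x)"
  shows "opnormA A (cadjoint T ^^ n) = opnormA A (T ^^ n)"
proof -
  have T'B: "cadjoint T (op_sqrt A x) = op_sqrt A (cadjoint T x)" for x
    by (rule cadjoint_commute[OF T pos_op_imp_hermitian[OF pos_op_op_sqrt[OF A]] TB])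
  have Tn: "bounded_clinear (T ^^ n)" and T'n: "bounded_clinear (cadjoint T ^^ n)"
    by (simp_all add: T bounded_clinear_funpow bounded_clinear_cadjoint)
  have adj: "cinner ((T ^^ n) u) v = cinner u ((cadjoint T ^^ n) v)" for u v
    by (rule cinner_funpow_adjoint[OF cinner_cadjoint[OF T]])
  then have adj': "cinner ((cadjoint T ^^ n) u) v = cinner u ((T ^^ n) v)" for u v
    by (metis cinner_commute)
  have TnB: "(T ^^ n) (op_sqrt A x) = op_sqrt A ((T ^^ n) x)" for x
    using funpow_intertwine[of "op_sqrt A" T T, OF TB[symmetric]] by simp
  have T'nB: "(cadjoint T ^^ n) (op_sqrt A x) = op_sqrt A ((cadjoint T ^^ n) x)" for x
    using funpow_intertwine[of "op_sqrt A" "cadjoint T" "cadjoint T", OF T'B[symmetric]] by simp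
  show ?thesis
    using opnormA_adjoint_le[OF A Tn T'n adj TnB T'nB] opnormA_adjoint_le[OF A T'n Tn adj' T'nB TnB]
    by (rule antisym)
qed

lemma opnormA_funpow_diamond:
  fixes A T :: "'a::chilbert_space \<Rightarrow> 'a"
  assumes A: "pos_op A" and T: "bounded_clinear T" and TB: "\<And>x. T (op_sqrt A x) = op_sqrt A (T x)"
  shows "opnormA A (diamond A T ^^ n) = opnormA A (cadjoint T ^^ n)"
proof (rule opnormA_cong)
  have T'B: "op_sqrt A (cadjoint T x) = cadjoint T (op_sqrt A x)" for x
    by (rule cadjoint_commute[OF T pos_op_imp_hermitian[OF pos_op_op_sqrt[OF A]] TB, symmetric])
  fix x
  have "op_sqrt A ((diamond A T ^^ n) x) = (cadjoint T ^^ n) (op_sqrt A x)"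
    by (rule funpow_intertwine[of "op_sqrt A" "diamond A T" "cadjoint T", OF op_sqrt_diamond[OF A T TB]])
  also have "\<dots> = op_sqrt A ((cadjoint T ^^ n) x)"
    by (rule funpow_intertwine[of "op_sqrt A" "cadjoint T" "cadjoint T", OF T'B, symmetric])
  finally show "normA A ((diamond A T ^^ n) x) = normA A ((cadjoint T ^^ n) x)"
    by (simp add: normA_eq_norm_op_sqrt[OF A])
qed

theorem mainTheorem8:
  fixes A T :: "'a::chilbert_space \<Rightarrow> 'a"
  assumes "pos_op A" and "A \<noteq> (\<lambda>_. 0)"
    and "in_BA_half A T" and "T \<circ> op_sqrt A = op_sqrt A \<circ> T"
  shows "rA A T = rA A (diamond A T)"
proof -
  have T: "bounded_clinear T" using \<open>in_BA_half A T\<close> by (simp add: in_BA_half_def)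
  have TB: "T (op_sqrt A x) = op_sqrt A (T x)" for x
    using \<open>T \<circ> op_sqrt A = op_sqrt A \<circ> T\<close> by (metis comp_apply)
  have "opnormA A (diamond A T ^^ n) = opnormA A (T ^^ n)" for n
    using opnormA_funpow_diamond[OF \<open>pos_op A\<close> T TB] opnormA_funpow_cadjoint[OF \<open>pos_op A\<close> T TB]
    by simp
  then show ?thesis by (simp add: rA_def)
qed

end
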